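(* Let $T$ be a tree with $n\ge 2$ vertices. Then $$F(T)\geq \prod_{v\in V(T)} d(v)!,$$ where $d(v)$ is the degree of $v$ in $T$. Equality holds if and only if $T$ is a path of length $n-1$ or a star.
   Context: For a finite undirected graph $G=(V,E)$, a shelling of $G$ is a total ordering $\sigma(1),\ldots,\sigma(|E|)$ of $E$ such that for every $k=1,\ldots,|E|$ the edges $\sigma(1),\ldots,\sigma(k)$ form a connected subgraph of $G$; $F(G)$ is the number of shellings of $G$. *)

theory Defs
  imports Main
begin

definition simple_graph :: "'a set \<Rightarrow> 'a set set \<Rightarrow> bool" where
  "simple_graph V E \<longleftrightarrow> finite V \<and> (\<forall>e\<in>E. card e = 2 \<and> e \<subseteq> V)"

definition adj_rel :: "'a set set \<Rightarrow> ('a \<times> 'a) set" where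
  "adj_rel E = {(x, y). {x, y} \<in> E}"

definition connected_graph :: "'a set \<Rightarrow> 'a set set \<Rightarrow> bool" where
  "connected_graph V E \<longleftrightarrow> (\<forall>u\<in>V. \<forall>v\<in>V. (u, v) \<in> (adj_rel E)\<^sup>*)"

definition is_cycle :: "'a set set \<Rightarrow> 'a list \<Rightarrow> bool" where
  "is_cycle E vs \<longleftrightarrow> length vs \<ge> 3 \<and> distinct vs \<and>
     (\<forall>i<length vs. {vs ! i, vs ! ((i + 1) mod length vs)} \<in> E)"

definition is_tree :: "'a set \<Rightarrow> 'a set set \<Rightarrow> bool" where
  "is_tree V E \<longleftrightarrow> simple_graph V E \<and> V \<noteq> {} \<and> connected_graph V E \<and>
     \<not> (\<exists>vs. is_cycle E vs)"

definition degree :: "'a set set \<Rightarrow> 'a \<Rightarrow> nat" where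
  "degree E v = card {e\<in>E. v \<in> e}"

definition edges_connected :: "'a set set \<Rightarrow> bool" where
  "edges_connected S \<longleftrightarrow> connected_graph (\<Union>S) S"

definition is_shelling :: "'a set set \<Rightarrow> 'a set list \<Rightarrow> bool" where
  "is_shelling E \<sigma> \<longleftrightarrow> distinct \<sigma> \<and> set \<sigma> = E \<and>
     (\<forall>k\<in>{1..length \<sigma>}. edges_connected (set (take k \<sigma>)))"

definition num_shellings :: "'a set set \<Rightarrow> nat" ("F") where
  "F E = card {\<sigma>. is_shelling E \<sigma>}"

definition is_path_graph :: "'a set \<Rightarrow> 'a set set \<Rightarrow> bool" where
  "is_path_graph V E \<longleftrightarrow> (\<exists>vs. distinct vs \<and> set vs = V \<and>
     E = {{vs ! i, vs ! (i + 1)} | i. i + 1 < length vs})"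

definition is_star :: "'a set \<Rightarrow> 'a set set \<Rightarrow> bool" where
  "is_star V E \<longleftrightarrow> (\<exists>c\<in>V. E = {{c, v} | v. v \<in> V \<and> v \<noteq> c})"

end

theory Submission
  imports Defs
begin

text \<open>
  The last edge of a shelling of a tree T is pendant, because deleting any other edge
  disconnects T; conversely a shelling of T - l extended by a pendant edge l is a shelling
  of T. So F(T) is the sum of F(T - l) over the pendant edges l. Write P(T) for the product
  of the factorials of the degrees. If l joins the leaf w to v, deleting l divides P(T) by d(v),
  so by induction it suffices that the pendant sum, the sum of P(T)/d(v) over the pendant
  edges, is at least P(T).

  Take a longest path x_0 ... x_k. If k is at most 2, T is a star centred at x_1 and the
  pendant sum is exactly P(T). Otherwise all edges at x_1 except x_1 x_2 are pendant, so
  together they contribute (d(x_1) - 1)/d(x_1) P(T), which is at least P(T)/2, and the same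
  holds at x_(k-1). Equality forces d(x_1) = d(x_(k-1)) = 2 and leaves only x_0 and x_k, and
  counting degrees then shows that T is a path. Conversely, deleting a leaf of a path or a star
  leaves a path or a star, and for both the pendant sum equals P(T), so F(T) = P(T).
\<close>

lemma simple_graph_finite_edges: "simple_graph V E \<Longrightarrow> finite E"
  unfolding simple_graph_def by (meson Pow_iff finite_Pow_iff finite_subset subsetI)

lemma simple_graph_doubleton:
  assumes "simple_graph V E" "{a, b} \<in> E"
  shows "a \<noteq> b" "a \<in> V" "b \<in> V"
proof -
  have "card {a, b} = 2" "{a, b} \<subseteq> V"
    using assms by (auto simp: simple_graph_def)
  then show "a \<noteq> b" "a \<in> V" "b \<in> V"
    by (cases "a = b"; auto)+
qed

lemma simple_graph_edgeE:
  assumes "simple_graph V E" "e \<in> E"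
  obtains a b where "e = {a, b}" "a \<noteq> b" "a \<in> V" "b \<in> V"
proof -
  have "card e = 2" "e \<subseteq> V"
    using assms by (auto simp: simple_graph_def)
  then show ?thesis
    using that by (auto simp: card_2_iff)
qed

lemma simple_graph_edge_at:
  assumes "simple_graph V E" "e \<in> E" "x \<in> e"
  obtains y where "e = {x, y}" "x \<noteq> y" "y \<in> V"
proof -
  have "card e = 2" "e \<subseteq> V"
    using assms(1,2) by (auto simp: simple_graph_def)
  with assms(3) show ?thesis
    using that by (auto simp: card_2_iff doubleton_eq_iff)
qed

lemma rtrancl_adj_rel_sym: "(a, b) \<in> (adj_rel E)\<^sup>* \<Longrightarrow> (b, a) \<in> (adj_rel E)\<^sup>*"
  using sym_rtrancl[of "adj_rel E"] by (auto simp: sym_def adj_rel_def insert_commute)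

lemma rtrancl_adj_rel_closed:
  assumes "(s, t) \<in> (adj_rel E)\<^sup>*" "s \<in> S" "\<And>p q. {p, q} \<in> E \<Longrightarrow> p \<in> S \<Longrightarrow> q \<in> S"
  shows "t \<in> S"
  using assms(1) by induction (use assms(2,3) in \<open>auto simp: adj_rel_def\<close>)

lemma connected_graphI:
  assumes "v \<in> V" "\<And>x. x \<in> V \<Longrightarrow> (v, x) \<in> (adj_rel E)\<^sup>*"
  shows "connected_graph V E"
  unfolding connected_graph_def using assms rtrancl_adj_rel_sym rtrancl_trans by metis

lemma connected_graph_edge_leaving:
  assumes "connected_graph V E" "s \<in> S" "S \<subseteq> V" "t \<in> V" "t \<notin> S"
  obtains p q where "{p, q} \<in> E" "p \<in> S" "q \<notin> S"
  using rtrancl_adj_rel_closed[of s t E S] assms unfolding connected_graph_def by blast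

section \<open>Walks and paths\<close>

abbreviation walk :: "'a set set \<Rightarrow> 'a list \<Rightarrow> bool" where
  "walk E \<equiv> successively (\<lambda>x y. {x, y} \<in> E)"

lemma walk_take: "walk E xs \<Longrightarrow> walk E (take n xs)"
  by (metis append_take_drop_id successively_append_iff)

lemma walk_drop: "walk E xs \<Longrightarrow> walk E (drop n xs)"
  by (metis append_take_drop_id successively_append_iff)

lemma rtrancl_adj_rel_imp_walk:
  assumes "(a, b) \<in> (adj_rel E)\<^sup>*"
  obtains xs where "xs \<noteq> []" "hd xs = a" "last xs = b" "distinct xs" "walk E xs"
  using assms
proof (induction arbitrary: thesis rule: rtrancl_induct)
  case base
  show ?case
    by (rule base[of "[a]"]) auto
next
  case (step y z)
  obtain xs where xs: "xs \<noteq> []" "hd xs = a" "last xs = y" "distinct xs" "walk E xs"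
    using step.IH .
  have "{y, z} \<in> E"
    using step.hyps(2) by (simp add: adj_rel_def)
  show ?case
  proof (cases "z \<in> set xs")
    case True
    then obtain ys zs where "xs = ys @ z # zs"
      by (meson split_list)
    with xs show ?thesis
      by (intro step.prems[of "ys @ [z]"]) (auto simp: successively_append_iff hd_append)
  next
    case False
    with xs \<open>{y, z} \<in> E\<close> show ?thesis
      by (intro step.prems[of "xs @ [z]"]) (auto simp: successively_append_iff)
  qed
qed

lemma is_cycleI:
  assumes "distinct ys" "3 \<le> length ys" "walk E ys" "{last ys, hd ys} \<in> E"
  shows "is_cycle E ys"
  unfolding is_cycle_def
proof (intro conjI allI impI)
  fix i assume i: "i < length ys"
  show "{ys ! i, ys ! ((i + 1) mod length ys)} \<in> E"
  proof (cases "Suc i < length ys")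
    case True
    then show ?thesis
      using assms(3) by (simp add: successively_conv_nth)
  next
    case False
    then have "i = length ys - 1" "ys \<noteq> []"
      using i by auto
    then have "ys ! i = last ys" "(i + 1) mod length ys = 0" "ys ! 0 = hd ys"
      by (auto simp: last_conv_nth hd_conv_nth)
    then show ?thesis
      using assms(4) by simp
  qed
qed (use assms in auto)

definition simple_path :: "'a set \<Rightarrow> 'a set set \<Rightarrow> 'a list \<Rightarrow> bool" where
  "simple_path V E xs \<longleftrightarrow> distinct xs \<and> set xs \<subseteq> V \<and> walk E xs"

definition longest_path :: "'a set \<Rightarrow> 'a set set \<Rightarrow> 'a list \<Rightarrow> bool" where
  "longest_path V E xs \<longleftrightarrow>
     simple_path V E xs \<and> (\<forall>ys. simple_path V E ys \<longrightarrow> length ys \<le> length xs)"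

lemma longest_path_exists:
  assumes "finite V"
  obtains xs where "longest_path V E xs"
proof -
  let ?P = "\<lambda>n. \<exists>xs. simple_path V E xs \<and> length xs = n"
  have "?P 0"
    by (auto simp: simple_path_def)
  moreover have "n \<le> card V" if "?P n" for n
    using that by (auto simp: simple_path_def) (metis assms card_mono distinct_card)
  ultimately obtain n where "?P n" "\<And>m. ?P m \<Longrightarrow> m \<le> n"
    using Nat.ex_has_greatest_nat[of ?P 0 "card V"] by blast
  then show ?thesis
    using that unfolding longest_path_def by blast
qed

lemma longest_path_rev: "longest_path V E xs \<Longrightarrow> longest_path V E (rev xs)"
  by (simp add: longest_path_def simple_path_def insert_commute)

lemma longest_path_hd_neighbour:
  assumes "simple_graph V E" "longest_path V E xs" "xs \<noteq> []" "{hd xs, z} \<in> E"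
  shows "z \<in> set xs"
proof (rule ccontr)
  assume "z \<notin> set xs"
  moreover have "z \<in> V"
    using assms(1,4) by (auto simp: simple_graph_def)
  ultimately have "simple_path V E (z # xs)"
    using assms(2-4) by (auto simp: longest_path_def simple_path_def successively_Cons insert_commute)
  then show False
    using assms(2) unfolding longest_path_def by fastforce
qed

lemma longest_path_length_ge_2:
  assumes "simple_graph V E" "E \<noteq> {}" "longest_path V E xs"
  shows "2 \<le> length xs"
proof -
  obtain e where e: "e \<in> E"
    using assms(2) by blast
  then obtain a where a: "a \<in> e"
    using assms(1) unfolding simple_graph_def by (metis card.empty ex_in_conv zero_neq_numeral)
  obtain b where "e = {a, b}"
    using simple_graph_edge_at[OF assms(1) e a] .
  then have "simple_path V E [a, b]"
    using simple_graph_doubleton[OF assms(1)] e by (auto simp: simple_path_def)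
  then show ?thesis
    using assms(3) by (fastforce simp: longest_path_def)
qed

definition path_edges :: "'a list \<Rightarrow> 'a set set" where
  "path_edges vs = {{vs ! i, vs ! (i + 1)} | i. i + 1 < length vs}"

lemma is_path_graph_iff: "is_path_graph V E \<longleftrightarrow> (\<exists>vs. distinct vs \<and> set vs = V \<and> E = path_edges vs)"
  by (simp add: is_path_graph_def path_edges_def)

lemma path_edges_Nil [simp]: "path_edges [] = {}"
  and path_edges_singleton [simp]: "path_edges [x] = {}"
  by (simp_all add: path_edges_def)

lemma path_edges_Cons_Cons [simp]:
  "path_edges (x # y # zs) = insert {x, y} (path_edges (y # zs))"
proof -
  have "{i. i + 1 < length (x # y # zs)} = insert 0 (Suc ` {i. i + 1 < length (y # zs)})"
    by (auto simp: image_iff less_Suc_eq_0_disj)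
  then show ?thesis
    unfolding path_edges_def by (auto simp: setcompr_eq_image image_image)
qed

lemma path_edges_subset_iff_walk: "path_edges xs \<subseteq> E \<longleftrightarrow> walk E xs"
  by (induction xs rule: induct_list012) auto

lemma path_edges_subset_set: "e \<in> path_edges xs \<Longrightarrow> e \<subseteq> set xs"
  by (induction xs rule: induct_list012) auto

lemma path_edges_nth: "Suc i < length xs \<Longrightarrow> {xs ! i, xs ! Suc i} \<in> path_edges xs"
  unfolding path_edges_def by auto

lemma path_edges_append_singleton:
  "xs \<noteq> [] \<Longrightarrow> path_edges (xs @ [y]) = insert {last xs, y} (path_edges xs)"
  by (induction xs rule: induct_list012) auto

lemma path_edges_rev [simp]: "path_edges (rev xs) = path_edges xs"
proof (induction xs)
  case (Cons x xs)
  show ?case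
  proof (cases xs)
    case (Cons y ys)
    then have "path_edges (rev xs @ [x]) = insert {x, y} (path_edges (rev xs))"
      by (simp add: path_edges_append_singleton last_rev insert_commute del: rev.simps)
    then show ?thesis
      using Cons.IH \<open>xs = y # ys\<close> by simp
  qed simp
qed simp

lemma card_path_edges: "distinct xs \<Longrightarrow> card (path_edges xs) = length xs - 1"
proof (induction xs rule: induct_list012)
  case (3 x y zs)
  have "{x, y} \<notin> path_edges (y # zs)"
    using 3(3) path_edges_subset_set by fastforce
  moreover have "finite (path_edges (y # zs))"
    unfolding path_edges_def by simp
  ultimately show ?case
    using 3 by simp
qed auto

section \<open>Shellings\<close>

lemma is_shelling_snoc_iff:
  "is_shelling E (\<sigma> @ [l]) \<longleftrightarrow> l \<in> E \<and> is_shelling (E - {l}) \<sigma> \<and> edges_connected E"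
proof -
  have "distinct (\<sigma> @ [l]) \<and> set (\<sigma> @ [l]) = E \<longleftrightarrow> l \<in> E \<and> distinct \<sigma> \<and> set \<sigma> = E - {l}"
    by auto
  moreover have "{1..length (\<sigma> @ [l])} = insert (length (\<sigma> @ [l])) {1..length \<sigma>}"
    by auto
  moreover have "take k (\<sigma> @ [l]) = take k \<sigma>" if "k \<in> {1..length \<sigma>}" for k
    using that by simp
  ultimately show ?thesis
    unfolding is_shelling_def by auto
qed

lemma num_shellings_empty: "F {} = 1"
proof -
  have "is_shelling {} \<sigma> \<longleftrightarrow> \<sigma> = []" for \<sigma> :: "'a set list"
    by (auto simp: is_shelling_def)
  then show ?thesis
    by (simp add: num_shellings_def)
qed

lemma num_shellings_not_connected:
  assumes "\<not> edges_connected S"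
  shows "F S = 0"
proof -
  have "S \<noteq> {}"
    using assms by (auto simp: edges_connected_def connected_graph_def)
  then have "\<not> is_shelling S \<sigma>" for \<sigma>
    using assms by (cases \<sigma> rule: rev_cases) (simp_all add: is_shelling_snoc_iff is_shelling_def[of _ "[]"])
  then show ?thesis
    by (simp add: num_shellings_def)
qed

lemma finite_shellings: "finite E \<Longrightarrow> finite {\<sigma>. is_shelling E \<sigma>}"
  by (rule finite_subset[OF _ finite_lists_length_le[of E "card E"]])
    (auto simp: is_shelling_def distinct_card)

lemma num_shellings_remove_last:
  assumes "finite E" "E \<noteq> {}" "edges_connected E"
  shows "F E = (\<Sum>l\<in>E. F (E - {l}))"
proof -
  let ?snoc = "\<lambda>l \<sigma>. \<sigma> @ [l]"
  have "{\<sigma>. is_shelling E \<sigma>} = (\<Union>l\<in>E. ?snoc l ` {\<sigma>. is_shelling (E - {l}) \<sigma>})"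
  proof (intro equalityI subsetI)
    fix \<sigma> assume "\<sigma> \<in> {\<sigma>. is_shelling E \<sigma>}"
    moreover have "\<sigma> \<noteq> []"
      using calculation assms(2) by (auto simp: is_shelling_def)
    ultimately show "\<sigma> \<in> (\<Union>l\<in>E. ?snoc l ` {\<sigma>. is_shelling (E - {l}) \<sigma>})"
      by (cases \<sigma> rule: rev_cases) (auto simp: is_shelling_snoc_iff)
  qed (auto simp: is_shelling_snoc_iff assms(3))
  then have "F E = card (\<Union>l\<in>E. ?snoc l ` {\<sigma>. is_shelling (E - {l}) \<sigma>})"
    by (simp add: num_shellings_def)
  also have "\<dots> = (\<Sum>l\<in>E. card (?snoc l ` {\<sigma>. is_shelling (E - {l}) \<sigma>}))"
    using assms(1) by (intro card_UN_disjoint) (auto simp: finite_shellings)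
  also have "\<dots> = (\<Sum>l\<in>E. F (E - {l}))"
    by (simp add: card_image inj_on_def num_shellings_def)
  finally show ?thesis .
qed

section \<open>Degrees and pendant edges\<close>

lemma degree_Diff_singleton:
  "degree (E - {l}) x = (if l \<in> E \<and> x \<in> l then degree E x - 1 else degree E x)"
proof -
  have "{e \<in> E - {l}. x \<in> e} = {e \<in> E. x \<in> e} - {l}"
    by blast
  then show ?thesis
    unfolding degree_def by (auto simp: card_Diff_singleton)
qed

lemma card_le_degree: "finite E \<Longrightarrow> S \<subseteq> {e \<in> E. x \<in> e} \<Longrightarrow> card S \<le> degree E x"
  unfolding degree_def by (rule card_mono) auto

lemma walk_interior_degree:
  assumes "finite E" "walk E xs" "distinct xs" "0 < i" "Suc i < length xs"
  shows "2 \<le> degree E (xs ! i)"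
proof -
  obtain k where k: "i = Suc k"
    using assms(4) by (cases i) auto
  have "{{xs ! k, xs ! i}, {xs ! i, xs ! Suc i}} \<subseteq> {e \<in> E. xs ! i \<in> e}"
    using assms(2,5) k by (auto simp: successively_conv_nth)
  moreover have "xs ! k \<noteq> xs ! Suc i" "xs ! k \<noteq> xs ! i"
    using assms(3,5) k by (simp_all add: nth_eq_iff_index_eq)
  then have "card {{xs ! k, xs ! i}, {xs ! i, xs ! Suc i}} = 2"
    by (simp add: doubleton_eq_iff)
  ultimately show ?thesis
    using card_le_degree[OF assms(1)] by metis
qed

lemma simple_graph_degree_sum:
  assumes "simple_graph V E"
  shows "(\<Sum>v\<in>V. degree E v) = 2 * card E"
proof -
  have fin: "finite V" and finE: "finite E"
    using assms simple_graph_finite_edges by (auto simp: simple_graph_def)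
  have "(\<Sum>v\<in>V. degree E v) = (\<Sum>v\<in>V. \<Sum>e\<in>E. of_bool (v \<in> e))"
    using finE by (simp add: degree_def Int_def)
  also have "\<dots> = (\<Sum>e\<in>E. \<Sum>v\<in>V. of_bool (v \<in> e))"
    by (rule sum.swap)
  also have "\<dots> = (\<Sum>e\<in>E. 2)"
  proof (rule sum.cong[OF refl])
    fix e assume "e \<in> E"
    then have "V \<inter> {v. v \<in> e} = e" "card e = 2"
      using assms by (auto simp: simple_graph_def)
    then show "(\<Sum>v\<in>V. of_bool (v \<in> e)) = (2 :: nat)"
      using fin by simp
  qed
  finally show ?thesis
    by simp
qed

definition pendant_at :: "'a set set \<Rightarrow> 'a \<Rightarrow> 'a set \<Rightarrow> bool" where
  "pendant_at E w e \<longleftrightarrow> e \<in> E \<and> w \<in> e \<and> (\<forall>e'\<in>E. w \<in> e' \<longrightarrow> e' = e)"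

definition pendant_edges :: "'a set set \<Rightarrow> 'a set set" where
  "pendant_edges E = {e. \<exists>w. pendant_at E w e}"

lemma pendant_edges_subset: "pendant_edges E \<subseteq> E"
  by (auto simp: pendant_edges_def pendant_at_def)

lemma pendant_at_degree: "pendant_at E w e \<Longrightarrow> degree E w = 1"
proof -
  assume "pendant_at E w e"
  then have "{e' \<in> E. w \<in> e'} = {e}"
    by (auto simp: pendant_at_def)
  then show ?thesis
    by (simp add: degree_def)
qed

lemma degree_eq_1_iff_pendant_at: "degree E w = 1 \<longleftrightarrow> (\<exists>e. pendant_at E w e)"
proof -
  have "degree E w = 1 \<longleftrightarrow> (\<exists>e. {e' \<in> E. w \<in> e'} = {e})"
    by (simp add: degree_def card_1_singleton_iff)
  also have "\<dots> \<longleftrightarrow> (\<exists>e. pendant_at E w e)"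
    unfolding pendant_at_def by (intro ex_cong1) blast
  finally show ?thesis .
qed

definition leaves :: "'a set \<Rightarrow> 'a set set \<Rightarrow> 'a set" where
  "leaves V E = {v \<in> V. degree E v = 1}"

lemma leaves_subset_if_pendant_edges_subset:
  assumes "pendant_edges E \<subseteq> {{a, x}, {b, y}}" "degree E a \<noteq> 1" "degree E b \<noteq> 1"
  shows "leaves V E \<subseteq> {x, y}"
proof
  fix v assume "v \<in> leaves V E"
  then obtain e where e: "pendant_at E v e"
    using degree_eq_1_iff_pendant_at[of E v] by (auto simp: leaves_def)
  moreover have "v \<noteq> a" "v \<noteq> b"
    using pendant_at_degree[OF e] assms(2,3) by auto
  ultimately show "v \<in> {x, y}"
    using assms(1) by (auto simp: pendant_edges_def pendant_at_def)
qed

definition degree_fact_prod :: "'a set \<Rightarrow> 'a set set \<Rightarrow> nat" where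
  "degree_fact_prod V E = (\<Prod>v\<in>V. fact (degree E v))"

lemma degree_fact_prod_no_edges [simp]: "degree_fact_prod V {} = 1"
  by (simp add: degree_fact_prod_def degree_def)

lemma degree_fact_prod_pos: "finite V \<Longrightarrow> 0 < degree_fact_prod V E"
  by (simp add: degree_fact_prod_def prod_pos)

lemma degree_fact_prod_remove_leaf:
  assumes "finite V" "pendant_at E w e"
  shows "degree_fact_prod (V - {w}) (E - {e}) = degree_fact_prod V (E - {e})"
proof -
  have "degree (E - {e}) w = 0"
    using assms(2) pendant_at_degree[OF assms(2)] by (simp add: degree_Diff_singleton pendant_at_def)
  show ?thesis
  proof (cases "w \<in> V")
    case True
    then show ?thesis
      unfolding degree_fact_prod_def
      using prod.remove[OF assms(1) True, of "\<lambda>v. fact (degree (E - {e}) v)"]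
        \<open>degree (E - {e}) w = 0\<close> by (metis fact_0 mult_1)
  qed (simp add: degree_fact_prod_def)
qed

lemma degree_fact_prod_remove_pendant:
  assumes "simple_graph V E" "pendant_at E w {v, w}"
  shows "degree_fact_prod V E = degree E v * degree_fact_prod V (E - {{v, w}})"
proof -
  let ?l = "{v, w}"
  have fin: "finite V"
    using assms(1) by (simp add: simple_graph_def)
  have l: "?l \<in> E"
    using assms(2) by (simp add: pendant_at_def)
  then have "v \<in> V" "v \<noteq> w"
    using simple_graph_doubleton[OF assms(1)] by auto
  have "degree E v \<noteq> 0"
    using l simple_graph_finite_edges[OF assms(1)] by (auto simp: degree_def)
  then have "fact (degree E v) = degree E v * fact (degree (E - {?l}) v)"
    using l by (simp add: degree_Diff_singleton fact_reduce)
  moreover have "fact (degree E x) = fact (degree (E - {?l}) x)" if "x \<in> V - {v}" for x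
    using that pendant_at_degree[OF assms(2)] by (auto simp: degree_Diff_singleton)
  ultimately show ?thesis
    unfolding degree_fact_prod_def using prod.remove[OF fin \<open>v \<in> V\<close>]
    by (metis (no_types, lifting) mult.assoc prod.cong)
qed

text \<open>The product stays over all of V: the leaf cut off with l has degree 0 in E - {l} and
  contributes 0! = 1, so each summand is the degree product of the smaller tree.\<close>

definition pendant_sum :: "'a set \<Rightarrow> 'a set set \<Rightarrow> nat" where
  "pendant_sum V E = (\<Sum>l\<in>pendant_edges E. degree_fact_prod V (E - {l}))"

lemma degree_mult_sum_pendant_at:
  assumes "simple_graph V E" "\<forall>e\<in>A. \<exists>y. e = {c, y} \<and> pendant_at E y e"
  shows "degree E c * (\<Sum>l\<in>A. degree_fact_prod V (E - {l})) = card A * degree_fact_prod V E"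
proof -
  have "degree E c * degree_fact_prod V (E - {l}) = degree_fact_prod V E" if l: "l \<in> A" for l
  proof -
    obtain y where "l = {c, y}" "pendant_at E y l"
      using assms(2) l by blast
    then show ?thesis
      using degree_fact_prod_remove_pendant[OF assms(1), of y c] by simp
  qed
  then show ?thesis
    by (simp add: sum_distrib_left)
qed

lemma mult_eq_pred_mult_bounds:
  fixes d s p :: nat
  assumes "d * s = (d - 1) * p" "2 \<le> d"
  shows "p \<le> 2 * s" and "p = 2 * s \<Longrightarrow> 0 < p \<Longrightarrow> d = 2"
proof -
  have "d * p \<le> (2 * (d - 1)) * p"
    using assms(2) by (intro mult_right_mono) auto
  also have "\<dots> = d * (2 * s)"
    using assms(1) by (simp add: algebra_simps)
  finally show "p \<le> 2 * s"
    using assms(2) by simp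
  assume "p = 2 * s" "0 < p"
  then have "d * p = (2 * (d - 1)) * p"
    using assms(1) by (simp add: algebra_simps)
  then show "d = 2"
    using \<open>0 < p\<close> assms(2) by simp
qed

lemma sum_ge_if_disjoint_halves:
  fixes f :: "'a \<Rightarrow> nat"
  assumes "finite L" "A \<union> B \<subseteq> L" "A \<inter> B = {}" "p \<le> 2 * sum f A" "p \<le> 2 * sum f B"
  shows "p \<le> sum f L"
    and "sum f L = p \<Longrightarrow> sum f (L - (A \<union> B)) = 0 \<and> p = 2 * sum f A \<and> p = 2 * sum f B"
proof -
  have "finite A" "finite B"
    using assms(1,2) finite_subset by auto
  then have "sum f L = sum f (L - (A \<union> B)) + sum f A + sum f B"
    using sum.subset_diff[OF assms(2,1), of f] sum.union_disjoint[OF _ _ assms(3), of f] by simp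
  then show "p \<le> sum f L" and "sum f L = p \<Longrightarrow> sum f (L - (A \<union> B)) = 0 \<and> p = 2 * sum f A \<and> p = 2 * sum f B"
    using assms(4,5) by linarith+
qed

section \<open>Trees\<close>

lemma tree_path_no_chord:
  assumes "is_tree V E" "simple_path V E xs" "i + 2 \<le> j" "j < length xs"
  shows "{xs ! i, xs ! j} \<notin> E"
proof
  assume chord: "{xs ! i, xs ! j} \<in> E"
  let ?ys = "drop i (take (Suc j) xs)"
  have "hd ?ys = xs ! i" "last ?ys = xs ! j"
    using assms(3,4) by (simp_all add: hd_drop_conv_nth take_Suc_conv_app_nth)
  moreover have "distinct ?ys" "walk E ?ys"
    using assms(2) by (simp_all add: simple_path_def walk_take walk_drop)
  ultimately have "is_cycle E ?ys"
    using assms(3,4) chord by (intro is_cycleI) (auto simp: insert_commute)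
  then show False
    using assms(1) by (auto simp: is_tree_def)
qed

lemma longest_path_hd_pendant:
  assumes "is_tree V E" "longest_path V E xs" "2 \<le> length xs"
  shows "pendant_at E (xs ! 0) {xs ! 0, xs ! 1}"
  unfolding pendant_at_def
proof (intro conjI ballI impI)
  have sg: "simple_graph V E" and path: "simple_path V E xs"
    using assms(1,2) by (auto simp: is_tree_def longest_path_def)
  show "{xs ! 0, xs ! 1} \<in> E"
    using path assms(3) by (auto simp: simple_path_def successively_conv_nth)
  fix e assume "e \<in> E" "xs ! 0 \<in> e"
  then obtain z where z: "e = {xs ! 0, z}" "xs ! 0 \<noteq> z"
    using simple_graph_edge_at[OF sg] by metis
  have "hd xs = xs ! 0"
    using assms(3) by (cases xs) auto
  then have "z \<in> set xs"
    using longest_path_hd_neighbour[OF sg assms(2)] assms(3) z \<open>e \<in> E\<close> by fastforce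
  then obtain j where j: "j < length xs" "z = xs ! j"
    by (auto simp: in_set_conv_nth)
  have "j = 1"
    using tree_path_no_chord[OF assms(1) path, of 0 j] j z \<open>e \<in> E\<close> by (cases j) fastforce+
  then show "e = {xs ! 0, xs ! 1}"
    using j z by simp
qed simp

lemma longest_path_second_edge_pendant:
  assumes "is_tree V E" "longest_path V E xs" "3 \<le> length xs"
    and "e \<in> E" "xs ! 1 \<in> e" "e \<noteq> {xs ! 1, xs ! 2}"
  obtains y where "e = {xs ! 1, y}" "pendant_at E y e"
proof -
  have sg: "simple_graph V E" and path: "simple_path V E xs"
    using assms(1,2) by (auto simp: is_tree_def longest_path_def)
  obtain y where y: "e = {xs ! 1, y}" "xs ! 1 \<noteq> y" "y \<in> V"
    using simple_graph_edge_at[OF sg assms(4,5)] .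
  have "pendant_at E y e"
  proof (cases "y \<in> set xs")
    case True
    then obtain j where j: "j < length xs" "y = xs ! j"
      by (auto simp: in_set_conv_nth)
    have "j \<noteq> 1" "j \<noteq> 2"
      using y(1,2) j(2) assms(6) by auto
    moreover have "\<not> 3 \<le> j"
      using tree_path_no_chord[OF assms(1) path, of 1 j] j y(1) assms(4) by auto
    ultimately have "j = 0"
      by linarith
    then show ?thesis
      using longest_path_hd_pendant[OF assms(1,2)] assms(3) j(2) y(1) by (simp add: insert_commute)
  next
    case False
    \<comment> \<open>replacing the first vertex of xs by y gives another longest path\<close>
    obtain x0 rest where xs: "xs = x0 # rest" "rest \<noteq> []"
      using assms(3) by (cases xs) force+
    then have "simple_path V E (y # rest)"
      using path False y assms(4) by (auto simp: simple_path_def successively_Cons hd_conv_nth insert_commute)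
    then have "longest_path V E (y # rest)"
      using assms(2) xs(1) by (simp add: longest_path_def)
    from longest_path_hd_pendant[OF assms(1) this] show ?thesis
      using assms(3) xs y(1) by (simp add: insert_commute)
  qed
  with y(1) show thesis
    using that by blast
qed

lemma tree_remove_leaf:
  assumes "is_tree V E" "pendant_at E w e"
  shows "is_tree (V - {w}) (E - {e})"
proof -
  have sg: "simple_graph V E"
    using assms(1) by (simp add: is_tree_def)
  obtain v where v: "e = {w, v}" "w \<noteq> v" "v \<in> V"
    using simple_graph_edge_at[OF sg] assms(2) unfolding pendant_at_def by metis
  have w_only_in_e: "w \<notin> e'" if "e' \<in> E - {e}" for e'
    using that assms(2) by (auto simp: pendant_at_def)
  have "simple_graph (V - {w}) (E - {e})"
    using sg w_only_in_e by (auto simp: simple_graph_def)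
  moreover have "connected_graph (V - {w}) (E - {e})"
  proof (rule connected_graphI)
    let ?S = "insert w {x. (v, x) \<in> (adj_rel (E - {e}))\<^sup>*}"
    fix x assume x: "x \<in> V - {w}"
    have "(v, x) \<in> (adj_rel E)\<^sup>*"
      using assms(1) v(3) x by (auto simp: is_tree_def connected_graph_def)
    moreover have "q \<in> ?S" if "{p, q} \<in> E" "p \<in> ?S" for p q
    proof (cases "{p, q} = e")
      case True
      then show ?thesis
        using v by (auto simp: doubleton_eq_iff)
    next
      case False
      then have "p \<noteq> w" "q \<noteq> w"
        using w_only_in_e that(1) by auto
      then show ?thesis
        using that False by (auto simp: adj_rel_def intro: rtrancl_into_rtrancl)
    qed
    ultimately show "(v, x) \<in> (adj_rel (E - {e}))\<^sup>*"
      using rtrancl_adj_rel_closed[of v x E ?S] x by blast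
  qed (use v in auto)
  moreover have "\<not> is_cycle (E - {e}) vs" for vs
    using assms(1) by (auto simp: is_tree_def is_cycle_def)
  ultimately show ?thesis
    using v unfolding is_tree_def by blast
qed

lemma tree_no_edges:
  assumes "is_tree V E" "E = {}"
  shows "card V = 1"
proof -
  obtain v where "v \<in> V"
    using assms(1) by (auto simp: is_tree_def)
  moreover have "x = v" if "x \<in> V" for x
    using assms that \<open>v \<in> V\<close> by (auto simp: is_tree_def connected_graph_def adj_rel_def)
  ultimately have "V = {v}"
    by blast
  then show ?thesis
    by simp
qed

lemma tree_card_edges:
  assumes "is_tree V E"
  shows "card E = card V - 1"
  using assms
proof (induction "card V" arbitrary: V E rule: less_induct)
  case less
  show ?case
  proof (cases "E = {}")
    case True
    then show ?thesis
      using tree_no_edges[OF less.prems] by simp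
  next
    case False
    have sg: "simple_graph V E" and fin: "finite V"
      using less.prems by (auto simp: is_tree_def simple_graph_def)
    obtain xs where xs: "longest_path V E xs"
      using longest_path_exists[OF fin] .
    have "2 \<le> length xs"
      using longest_path_length_ge_2[OF sg False xs] .
    with xs have leaf: "pendant_at E (xs ! 0) {xs ! 0, xs ! 1}"
      using longest_path_hd_pendant[OF less.prems] by blast
    then have e: "{xs ! 0, xs ! 1} \<in> E"
      by (simp add: pendant_at_def)
    then have "xs ! 0 \<in> V" "xs ! 1 \<in> V - {xs ! 0}"
      using simple_graph_doubleton[OF sg e] by auto
    then have "card (E - {{xs ! 0, xs ! 1}}) = card (V - {xs ! 0}) - 1"
      using less.hyps[OF _ tree_remove_leaf[OF less.prems leaf]] card_Diff1_less[OF fin] by blast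
    moreover have "card E > 0" "card (V - {xs ! 0}) > 0"
      using e \<open>xs ! 1 \<in> V - {xs ! 0}\<close> fin simple_graph_finite_edges[OF sg] by (auto simp: card_gt_0_iff)
    ultimately show ?thesis
      using e \<open>xs ! 0 \<in> V\<close> by (simp add: card_Diff_singleton)
  qed
qed

lemma tree_edges_nonempty_iff:
  assumes "is_tree V E"
  shows "E \<noteq> {} \<longleftrightarrow> 2 \<le> card V"
proof -
  have "finite E" "V \<noteq> {}" "finite V"
    using assms simple_graph_finite_edges by (auto simp: is_tree_def simple_graph_def)
  then show ?thesis
    using tree_card_edges[OF assms] by (auto simp: card_gt_0_iff)
qed

lemma tree_degree_pos:
  assumes "is_tree V E" "2 \<le> card V" "v \<in> V"
  shows "0 < degree E v"
proof -
  have "\<not> V \<subseteq> {v}"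
  proof
    assume "V \<subseteq> {v}"
    then have "card V \<le> 1"
      using card_mono[of "{v}" V] by simp
    then show False
      using assms(2) by simp
  qed
  then obtain t where "t \<in> V" "t \<notin> {v}"
    by blast
  moreover have "connected_graph V E"
    using assms(1) by (simp add: is_tree_def)
  ultimately obtain p q where "{p, q} \<in> E" "p \<in> {v}" "q \<notin> {v}"
    using connected_graph_edge_leaving[of V E v "{v}" t] assms(3) by blast
  then have "{p, q} \<in> {e \<in> E. v \<in> e}"
    by simp
  moreover have "finite E"
    using simple_graph_finite_edges assms(1) by (auto simp: is_tree_def)
  ultimately show ?thesis
    unfolding degree_def by (auto simp: card_gt_0_iff)
qed

lemma tree_remove_pendant_edge:
  assumes "is_tree V E" "pendant_at E w l"
  shows "is_tree (V - {w}) (E - {l})" and "card (V - {w}) < card V"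
    and "degree_fact_prod (V - {w}) (E - {l}) = degree_fact_prod V (E - {l})"
proof -
  have fin: "finite V"
    using assms(1) by (simp add: is_tree_def simple_graph_def)
  have "w \<in> V"
    using assms unfolding is_tree_def simple_graph_def pendant_at_def by blast
  show "is_tree (V - {w}) (E - {l})"
    using tree_remove_leaf[OF assms] .
  show "card (V - {w}) < card V"
    using card_Diff1_less[OF fin \<open>w \<in> V\<close>] .
  show "degree_fact_prod (V - {w}) (E - {l}) = degree_fact_prod V (E - {l})"
    using degree_fact_prod_remove_leaf[OF fin assms(2)] .
qed

lemma tree_edges_connected: "is_tree V E \<Longrightarrow> edges_connected E"
  unfolding is_tree_def simple_graph_def edges_connected_def connected_graph_def by blast

lemma tree_connected_removal_imp_pendant:
  assumes "is_tree V E" "l \<in> E" "edges_connected (E - {l})"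
  shows "l \<in> pendant_edges E"
proof -
  have sg: "simple_graph V E"
    using assms(1) by (simp add: is_tree_def)
  obtain a where "a \<in> l"
    using sg assms(2) unfolding simple_graph_def by (metis card.empty ex_in_conv zero_neq_numeral)
  then obtain b where l: "l = {a, b}" "a \<noteq> b"
    using simple_graph_edge_at[OF sg assms(2)] by metis
  have "\<not> (a \<in> \<Union>(E - {l}) \<and> b \<in> \<Union>(E - {l}))"
  proof
    assume "a \<in> \<Union>(E - {l}) \<and> b \<in> \<Union>(E - {l})"
    then have "(a, b) \<in> (adj_rel (E - {l}))\<^sup>*"
      using assms(3) by (auto simp: edges_connected_def connected_graph_def)
    then obtain xs where xs: "xs \<noteq> []" "hd xs = a" "last xs = b" "distinct xs" "walk (E - {l}) xs"
      by (rule rtrancl_adj_rel_imp_walk)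
    have "3 \<le> length xs"
      using xs l by (cases xs; cases "tl xs"; cases "tl (tl xs)") auto
    moreover have "walk E xs"
      using xs(5) by (rule successively_mono) auto
    ultimately have "is_cycle E xs"
      using xs assms(2) l by (intro is_cycleI) (auto simp: insert_commute)
    then show False
      using assms(1) by (auto simp: is_tree_def)
  qed
  then have "pendant_at E a l \<or> pendant_at E b l"
    using assms(2) l by (auto simp: pendant_at_def)
  then show ?thesis
    by (auto simp: pendant_edges_def)
qed

lemma tree_num_shellings_remove_last:
  assumes "is_tree V E" "E \<noteq> {}"
  shows "F E = (\<Sum>l\<in>pendant_edges E. F (E - {l}))"
proof -
  have fin: "finite E"
    using assms(1) simple_graph_finite_edges by (auto simp: is_tree_def)
  have "F E = (\<Sum>l\<in>E. F (E - {l}))"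
    using num_shellings_remove_last[OF fin assms(2) tree_edges_connected[OF assms(1)]] .
  also have "\<dots> = (\<Sum>l\<in>pendant_edges E. F (E - {l}))"
  proof (rule sum.mono_neutral_right[OF fin])
    show "pendant_edges E \<subseteq> E"
      by (rule pendant_edges_subset)
    show "\<forall>l\<in>E - pendant_edges E. F (E - {l}) = 0"
      using tree_connected_removal_imp_pendant[OF assms(1)] num_shellings_not_connected by blast
  qed
  finally show ?thesis .
qed

section \<open>Stars\<close>

lemma pendant_neighbours_imp_adjacent:
  assumes "is_tree V E" "c \<in> V" "\<forall>e\<in>E. c \<in> e \<longrightarrow> (\<exists>y. e = {c, y} \<and> pendant_at E y e)"
    and "v \<in> V" "v \<noteq> c"
  shows "pendant_at E v {c, v}"
proof -
  have pendant: "pendant_at E p {c, p}" if "{c, p} \<in> E" "p \<noteq> c" for p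
    using assms(3) that by (metis doubleton_eq_iff insertI1)
  let ?S = "{r. r = c \<or> {c, r} \<in> E}"
  have "q \<in> ?S" if pq: "{p, q} \<in> E" "p \<in> ?S" for p q
  proof (cases "p = c")
    case False
    then have "{p, q} = {c, p}"
      using pendant[of p] pq by (auto simp: pendant_at_def)
    then show ?thesis
      using pq(2) by (auto simp: doubleton_eq_iff)
  qed (use pq in simp)
  then have "v \<in> ?S"
    using rtrancl_adj_rel_closed[of c v E ?S] assms(1,2,4) by (auto simp: is_tree_def connected_graph_def)
  then show ?thesis
    using pendant assms(5) by simp
qed

lemma pendant_neighbours_imp_star:
  assumes "is_tree V E" "c \<in> V" "\<forall>e\<in>E. c \<in> e \<longrightarrow> (\<exists>y. e = {c, y} \<and> pendant_at E y e)"
  shows "is_star V E"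
proof -
  note adjacent = pendant_neighbours_imp_adjacent[OF assms]
  have "E = {{c, v} | v. v \<in> V \<and> v \<noteq> c}"
  proof (intro equalityI subsetI)
    fix e assume e: "e \<in> E"
    then obtain a b where ab: "e = {a, b}" "a \<noteq> b" "a \<in> V" "b \<in> V"
      using assms(1) simple_graph_edgeE by (metis is_tree_def)
    have "c \<in> e"
    proof (cases "a = c")
      case False
      then have "e = {c, a}"
        using adjacent[OF ab(3)] e ab(1) by (simp add: pendant_at_def)
      then show ?thesis
        by simp
    qed (use ab(1) in simp)
    then obtain y where "e = {c, y}"
      using assms(3) e by blast
    then show "e \<in> {{c, v} | v. v \<in> V \<and> v \<noteq> c}"
      using simple_graph_doubleton[of V E c y] e assms(1) by (auto simp: is_tree_def)
  next
    fix e assume "e \<in> {{c, v} | v. v \<in> V \<and> v \<noteq> c}"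
    then show "e \<in> E"
      using adjacent by (auto simp: pendant_at_def)
  qed
  then show ?thesis
    using assms(2) by (auto simp: is_star_def)
qed

lemma star_pendant_at:
  assumes "E = {{c, v} | v. v \<in> V \<and> v \<noteq> c}" "v \<in> V" "v \<noteq> c"
  shows "pendant_at E v {c, v}"
  using assms by (auto simp: pendant_at_def)

lemma star_pendant_sum:
  assumes "simple_graph V E" "2 \<le> card V" "c \<in> V" "E = {{c, v} | v. v \<in> V \<and> v \<noteq> c}"
  shows "pendant_sum V E = degree_fact_prod V E"
proof -
  have twigs: "\<forall>e\<in>E. \<exists>y. e = {c, y} \<and> pendant_at E y e"
    using star_pendant_at[OF assms(4)] assms(4) by blast
  then have "pendant_edges E = E"
    using pendant_edges_subset[of E] unfolding pendant_edges_def by blast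
  moreover have "degree E c = card E"
    using assms(4) by (auto simp: degree_def intro: arg_cong[of _ _ card])
  moreover have "card E \<noteq> 0"
  proof -
    have "\<not> (\<forall>a\<in>V. \<forall>b\<in>V. a = b)"
      using assms(1,2) card_le_Suc0_iff_eq[of V] by (simp add: simple_graph_def)
    then obtain v where "v \<in> V" "v \<noteq> c"
      using assms(3) by blast
    then show ?thesis
      using assms(4) simple_graph_finite_edges[OF assms(1)] by auto
  qed
  ultimately show ?thesis
    using degree_mult_sum_pendant_at[OF assms(1) twigs] by (simp add: pendant_sum_def)
qed

lemma star_remove_pendant_edge:
  assumes "E = {{c, v} | v. v \<in> V \<and> v \<noteq> c}" "c \<in> V" "l \<in> pendant_edges E"
  obtains w where "pendant_at E w l" "is_star (V - {w}) (E - {l})"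
proof -
  obtain v where v: "l = {c, v}" "v \<in> V" "v \<noteq> c"
    using assms(1,3) pendant_edges_subset by blast
  then have "E - {l} = {{c, u} | u. u \<in> V - {v} \<and> u \<noteq> c}"
    using assms(1) by (auto simp: doubleton_eq_iff)
  then have "is_star (V - {v}) (E - {l})"
    using assms(2) v(3) by (auto simp: is_star_def)
  then show thesis
    using that star_pendant_at[OF assms(1) v(2,3)] v(1) by blast
qed

section \<open>Paths\<close>

lemma tree_max_degree_2_if_leaves_subset:
  assumes "is_tree V E" "2 \<le> card V" "leaves V E \<subseteq> {x, y}" "v \<in> V"
  shows "degree E v \<le> 2"
proof (rule ccontr)
  let ?L = "leaves V E"
  assume "\<not> degree E v \<le> 2"
  have fin: "finite V" and sg: "simple_graph V E"
    using assms(1) by (auto simp: is_tree_def simple_graph_def)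
  have "card ?L \<le> card {x, y}"
    using assms(3) by (intro card_mono) auto
  also have "\<dots> \<le> 2"
    by (simp add: card_insert_if)
  finally have "card ?L \<le> 2" .
  have "(\<Sum>u\<in>V. 2) < (\<Sum>u\<in>V. degree E u + of_bool (u \<in> ?L))"
  proof (rule sum_strict_mono_ex1[OF fin])
    show "\<forall>u\<in>V. (2::nat) \<le> degree E u + of_bool (u \<in> ?L)"
      using tree_degree_pos[OF assms(1,2)] by (force simp: leaves_def Suc_le_eq)
    show "\<exists>u\<in>V. (2::nat) < degree E u + of_bool (u \<in> ?L)"
      using assms(4) \<open>\<not> degree E v \<le> 2\<close> by (intro bexI[of _ v]) auto
  qed
  also have "\<dots> = 2 * (card V - 1) + card ?L"
    using simple_graph_degree_sum[OF sg] tree_card_edges[OF assms(1)] fin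
    by (simp add: sum.distrib Int_def leaves_def)
  finally show False
    using assms(2) \<open>card ?L \<le> 2\<close> by simp
qed

lemma longest_path_spans_if_max_degree_2:
  assumes "is_tree V E" "\<forall>v\<in>V. degree E v \<le> 2" "longest_path V E xs" "2 \<le> length xs"
  shows "set xs = V"
proof (rule ccontr)
  have sg: "simple_graph V E" and finE: "finite E"
    using assms(1) simple_graph_finite_edges by (auto simp: is_tree_def)
  have dxs: "distinct xs" and sV: "set xs \<subseteq> V" and wxs: "walk E xs"
    using assms(3) by (auto simp: longest_path_def simple_path_def)
  assume "set xs \<noteq> V"
  then obtain t where "t \<in> V" "t \<notin> set xs"
    using sV by blast
  moreover have "xs ! 0 \<in> set xs" "xs \<noteq> []"
    using assms(4) by (auto intro: nth_mem)
  ultimately obtain p q where pq: "{p, q} \<in> E" "p \<in> set xs" "q \<notin> set xs"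
    using connected_graph_edge_leaving[of V E "xs ! 0" "set xs" t] assms(1) sV by (metis is_tree_def)
  then obtain i where i: "i < length xs" "p = xs ! i"
    by (auto simp: in_set_conv_nth)
  consider "i = 0" | "i = length xs - 1" | "0 < i" "Suc i < length xs"
    using i(1) by linarith
  then show False
  proof cases
    case 1
    then show False
      using longest_path_hd_neighbour[OF sg assms(3)] pq i \<open>xs \<noteq> []\<close> by (auto simp: hd_conv_nth)
  next
    case 2
    then show False
      using longest_path_hd_neighbour[OF sg longest_path_rev[OF assms(3)]] pq i \<open>xs \<noteq> []\<close>
      by (auto simp: hd_rev last_conv_nth)
  next
    case 3
    then obtain k where k: "i = Suc k"
      by (cases i) auto
    have "{xs ! k, p} \<in> E" "{p, xs ! Suc i} \<in> E" "xs ! k \<noteq> xs ! Suc i" "xs ! k \<noteq> p" "p \<noteq> xs ! Suc i"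
      using wxs dxs 3 i k by (auto simp: successively_conv_nth nth_eq_iff_index_eq)
    moreover have "q \<noteq> xs ! k" "q \<noteq> xs ! Suc i"
      using pq(3) 3 k by auto
    ultimately have "3 \<le> degree E p"
      using card_le_degree[OF finE, of "{{xs ! k, p}, {p, xs ! Suc i}, {p, q}}" p] pq(1)
      by (auto simp: doubleton_eq_iff)
    then show False
      using assms(2) sV pq(2) by fastforce
  qed
qed

lemma tree_leaves_subset_imp_path:
  assumes "is_tree V E" "2 \<le> card V" "leaves V E \<subseteq> {x, y}"
  shows "is_path_graph V E"
proof -
  have sg: "simple_graph V E" and fin: "finite V" and finE: "finite E"
    using assms(1) simple_graph_finite_edges by (auto simp: is_tree_def simple_graph_def)
  have "E \<noteq> {}"
    using tree_edges_nonempty_iff[OF assms(1)] assms(2) by simp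
  obtain xs where lp: "longest_path V E xs"
    using longest_path_exists[OF fin] .
  then have dxs: "distinct xs" and wxs: "walk E xs"
    by (auto simp: longest_path_def simple_path_def)
  have "set xs = V"
    using longest_path_spans_if_max_degree_2[OF assms(1) _ lp]
      tree_max_degree_2_if_leaves_subset[OF assms] longest_path_length_ge_2[OF sg \<open>E \<noteq> {}\<close> lp]
    by blast
  moreover have "path_edges xs = E"
  proof (rule card_subset_eq[OF finE])
    show "path_edges xs \<subseteq> E"
      using wxs path_edges_subset_iff_walk by blast
    show "card (path_edges xs) = card E"
      using card_path_edges[OF dxs] tree_card_edges[OF assms(1)] distinct_card[OF dxs] \<open>set xs = V\<close>
      by simp
  qed
  ultimately show ?thesis
    using dxs by (auto simp: is_path_graph_iff)
qed

lemma path_edges_pendant_at: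
  assumes "distinct vs" "pendant_at (path_edges vs) w l"
  shows "l = {vs ! 0, vs ! 1} \<or> l = {rev vs ! 0, rev vs ! 1}"
proof -
  let ?n = "length vs"
  have "l \<in> path_edges vs" "w \<in> l"
    using assms(2) by (auto simp: pendant_at_def)
  then have "w \<in> set vs" "Suc 0 < ?n"
    using path_edges_subset_set by (auto simp: path_edges_def)
  then obtain j where j: "j < ?n" "w = vs ! j"
    by (auto simp: in_set_conv_nth)
  have only_l: "\<forall>e\<in>path_edges vs. w \<in> e \<longrightarrow> e = l"
    using assms(2) by (simp add: pendant_at_def)
  have edge: "{vs ! i, vs ! Suc i} = l" if "Suc i < ?n" "w \<in> {vs ! i, vs ! Suc i}" for i
    by (rule only_l[rule_format, OF path_edges_nth[OF that(1)] that(2)])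
  consider "j = 0" | "j = ?n - 1" | "0 < j" "Suc j < ?n"
    using j(1) by linarith
  then show ?thesis
  proof cases
    case 1
    then show ?thesis
      using edge[of 0] j \<open>Suc 0 < ?n\<close> by simp
  next
    case 2
    then have "{vs ! (?n - 2), vs ! (?n - 1)} = l"
      using edge[of "?n - 2"] j \<open>Suc 0 < ?n\<close> by (simp add: numeral_2_eq_2 Suc_diff_Suc)
    moreover have "0 < ?n"
      using \<open>Suc 0 < ?n\<close> by linarith
    then have "rev vs ! 0 = vs ! (?n - 1)" "rev vs ! 1 = vs ! (?n - 2)"
      using rev_nth[OF \<open>0 < ?n\<close>] rev_nth[OF \<open>Suc 0 < ?n\<close>] by (simp_all add: numeral_2_eq_2)
    ultimately show ?thesis
      by (simp add: insert_commute)
  next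
    case 3
    then have "{vs ! (j - 1), vs ! j} = {vs ! j, vs ! Suc j}"
      using edge[of "j - 1"] edge[of j] j by simp
    moreover have "vs ! (j - 1) \<noteq> vs ! j" "vs ! (j - 1) \<noteq> vs ! Suc j"
      using assms(1) 3 by (simp_all add: nth_eq_iff_index_eq)
    ultimately show ?thesis
      by (auto simp: doubleton_eq_iff)
  qed
qed

lemma path_graph_first_edge:
  assumes "is_tree V E" "distinct vs" "set vs = V" "E = path_edges vs" "2 \<le> length vs"
  shows "longest_path V E vs" and "pendant_at E (vs ! 0) {vs ! 0, vs ! 1}"
    and "is_path_graph (V - {vs ! 0}) (E - {{vs ! 0, vs ! 1}})"
proof -
  have fin: "finite V"
    using assms(1) by (simp add: is_tree_def simple_graph_def)
  have "length ys \<le> length vs" if "simple_path V E ys" for ys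
    using that card_mono[OF fin] assms(2,3) by (metis distinct_card simple_path_def)
  then show lp: "longest_path V E vs"
    using assms(2-4) path_edges_subset_iff_walk[of vs E] by (simp add: longest_path_def simple_path_def)
  show "pendant_at E (vs ! 0) {vs ! 0, vs ! 1}"
    using longest_path_hd_pendant[OF assms(1) lp assms(5)] .
  obtain x y zs where vs: "vs = x # y # zs"
    using assms(5) by (cases vs; cases "tl vs") auto
  then have "{x, y} \<notin> path_edges (y # zs)"
    using assms(2) path_edges_subset_set by fastforce
  then have "E - {{x, y}} = path_edges (y # zs)"
    using assms(4) vs by auto
  moreover have "V - {x} = set (y # zs)"
    using assms(2,3) vs by auto
  ultimately show "is_path_graph (V - {vs ! 0}) (E - {{vs ! 0, vs ! 1}})"
    unfolding is_path_graph_iff using assms(2) vs by (intro exI[of _ "y # zs"]) simp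
qed

lemma path_graph_remove_pendant_edge:
  assumes "is_tree V E" "distinct vs" "set vs = V" "E = path_edges vs" "l \<in> pendant_edges E"
  obtains w where "pendant_at E w l" "is_path_graph (V - {w}) (E - {l})"
proof -
  have "2 \<le> length vs"
    using assms(4,5) pendant_edges_subset by (fastforce simp: path_edges_def)
  moreover have "l = {vs ! 0, vs ! 1} \<or> l = {rev vs ! 0, rev vs ! 1}"
    using assms(5) path_edges_pendant_at[OF assms(2)] assms(4) by (auto simp: pendant_edges_def)
  ultimately show thesis
    using that path_graph_first_edge(2,3)[OF assms(1-4)]
      path_graph_first_edge(2,3)[OF assms(1), of "rev vs"] assms(2-4) by auto
qed

lemma path_graph_card_2_imp_star:
  assumes "is_path_graph V E" "card V = 2"
  shows "is_star V E"
proof -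
  obtain vs where vs: "distinct vs" "set vs = V" "E = path_edges vs"
    using assms(1) by (auto simp: is_path_graph_iff)
  then have "length vs = 2"
    using assms(2) distinct_card by fastforce
  then obtain x y where "vs = [x, y]"
    by (cases vs; cases "tl vs") auto
  then show ?thesis
    using vs unfolding is_star_def by (intro bexI[of _ x]) auto
qed

section \<open>The pendant sum bound\<close>

lemma longest_path_le_3_pendant_at:
  assumes "is_tree V E" "longest_path V E xs" "2 \<le> length xs" "length xs \<le> 3"
    and "e \<in> E" "xs ! 1 \<in> e"
  shows "\<exists>y. e = {xs ! 1, y} \<and> pendant_at E y e"
proof -
  have sg: "simple_graph V E" and path: "simple_path V E xs"
    using assms(1,2) by (auto simp: is_tree_def longest_path_def)
  have rev_lp: "longest_path V E (rev xs)"
    using assms(2) by (rule longest_path_rev)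
  show ?thesis
  proof (cases "length xs = 2")
    case True
    obtain z where z: "e = {xs ! 1, z}" "xs ! 1 \<noteq> z"
      using simple_graph_edge_at[OF sg assms(5,6)] by metis
    have "hd (rev xs) = xs ! 1"
      using True by (subst hd_rev, subst last_conv_nth) auto
    then have "z \<in> set xs"
      using longest_path_hd_neighbour[OF sg rev_lp] True z assms(5) by fastforce
    then have "z = xs ! 0"
      using True z(2) by (auto simp: in_set_conv_nth less_Suc_eq numeral_2_eq_2)
    then show ?thesis
      using longest_path_hd_pendant[OF assms(1,2)] True z(1) by (auto simp: insert_commute)
  next
    case False
    then have len: "length xs = 3"
      using assms(3,4) by simp
    show ?thesis
    proof (cases "e = {xs ! 1, xs ! 2}")
      case True
      have "rev xs ! 1 = xs ! 1" "rev xs ! 2 = xs ! 0"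
        using len by (simp_all add: rev_nth)
      moreover have "xs ! 2 \<noteq> xs ! 0"
        using path len by (simp add: simple_path_def nth_eq_iff_index_eq)
      ultimately have "e \<noteq> {rev xs ! 1, rev xs ! 2}"
        using True by (auto simp: doubleton_eq_iff)
      then show ?thesis
        using longest_path_second_edge_pendant[OF assms(1) rev_lp _ assms(5)] assms(6) len
          \<open>rev xs ! 1 = xs ! 1\<close> by (metis length_rev order_refl)
    qed (use longest_path_second_edge_pendant[OF assms(1,2) _ assms(5,6)] len in auto)
  qed
qed

lemma longest_path_end_pendant_sum:
  assumes "is_tree V E" "longest_path V E xs" "3 \<le> length xs"
  obtains A where "\<forall>e\<in>A. \<exists>y. e = {xs ! 1, y} \<and> pendant_at E y e"
    "degree_fact_prod V E \<le> 2 * (\<Sum>l\<in>A. degree_fact_prod V (E - {l}))"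
    "degree_fact_prod V E = 2 * (\<Sum>l\<in>A. degree_fact_prod V (E - {l})) \<Longrightarrow> A = {{xs ! 1, xs ! 0}}"
proof -
  let ?a = "xs ! 1" and ?P = "degree_fact_prod V E"
  define A where "A = {e \<in> E. ?a \<in> e} - {{?a, xs ! 2}}"
  have sg: "simple_graph V E" and path: "simple_path V E xs"
    using assms(1,2) by (auto simp: is_tree_def longest_path_def)
  then have "distinct xs"
    by (simp add: simple_path_def)
  have "{xs ! 0, ?a} \<in> E" "{?a, xs ! 2} \<in> E"
    using path assms(3) by (auto simp: simple_path_def successively_conv_nth numeral_2_eq_2)
  moreover have "xs ! 0 \<noteq> xs ! 2"
    using \<open>distinct xs\<close> assms(3) by (subst nth_eq_iff_index_eq) auto
  ultimately have a0: "{?a, xs ! 0} \<in> A"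
    by (auto simp: A_def insert_commute doubleton_eq_iff)
  have twigs: "\<forall>e\<in>A. \<exists>y. e = {?a, y} \<and> pendant_at E y e"
    using longest_path_second_edge_pendant[OF assms] by (auto simp: A_def)
  have card_A: "card A = degree E ?a - 1"
    using \<open>{?a, xs ! 2} \<in> E\<close> by (simp add: A_def degree_def card_Diff_singleton)
  have deg: "2 \<le> degree E ?a"
    using walk_interior_degree[of E xs 1] simple_graph_finite_edges[OF sg] path assms(3)
    by (simp add: simple_path_def)
  have sum: "degree E ?a * (\<Sum>l\<in>A. degree_fact_prod V (E - {l})) = (degree E ?a - 1) * ?P"
    using degree_mult_sum_pendant_at[OF sg twigs] card_A by simp
  have "A = {{?a, xs ! 0}}" if "?P = 2 * (\<Sum>l\<in>A. degree_fact_prod V (E - {l}))"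
  proof -
    have "degree E ?a = 2"
      using mult_eq_pred_mult_bounds(2)[OF sum deg that] degree_fact_prod_pos[of V E] sg
      by (simp add: simple_graph_def)
    then have "card A = 1"
      using card_A by simp
    then obtain e where "A = {e}"
      by (rule card_1_singletonE)
    then show ?thesis
      using a0 by simp
  qed
  then show thesis
    using that[OF twigs mult_eq_pred_mult_bounds(1)[OF sum deg]] by blast
qed

lemma degree_fact_prod_le_pendant_sum_of_halves:
  fixes V :: "'a set" and E A B :: "'a set set"
  defines "S \<equiv> \<lambda>A. \<Sum>l\<in>A. degree_fact_prod V (E - {l})"
  assumes "finite V" "finite E" "a \<noteq> b" "2 \<le> degree E a" "2 \<le> degree E b"
    and A: "\<forall>e\<in>A. \<exists>z. e = {a, z} \<and> pendant_at E z e" "degree_fact_prod V E \<le> 2 * S A"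
      "degree_fact_prod V E = 2 * S A \<Longrightarrow> A = {{a, x}}"
    and B: "\<forall>e\<in>B. \<exists>z. e = {b, z} \<and> pendant_at E z e" "degree_fact_prod V E \<le> 2 * S B"
      "degree_fact_prod V E = 2 * S B \<Longrightarrow> B = {{b, y}}"
  shows "degree_fact_prod V E \<le> pendant_sum V E"
    and "pendant_sum V E = degree_fact_prod V E \<Longrightarrow> leaves V E \<subseteq> {x, y}"
proof -
  let ?P = "degree_fact_prod V E"
  have "A \<inter> B = {}"
  proof (rule ccontr)
    assume "A \<inter> B \<noteq> {}"
    then obtain e z where "e \<in> A" "e = {b, z}" "pendant_at E z e"
      using B(1) by blast
    moreover have "a \<in> e"
      using A(1) \<open>e \<in> A\<close> by blast
    ultimately have "pendant_at E a e"
      using assms(4) by auto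
    then show False
      using pendant_at_degree assms(5) by fastforce
  qed
  have AB: "A \<union> B \<subseteq> pendant_edges E"
    using A(1) B(1) by (auto simp: pendant_edges_def)
  have finL: "finite (pendant_edges E)"
    using assms(3) pendant_edges_subset finite_subset by blast
  note halves = sum_ge_if_disjoint_halves[OF finL AB \<open>A \<inter> B = {}\<close> A(2)[unfolded S_def] B(2)[unfolded S_def]]
  then show "?P \<le> pendant_sum V E"
    by (simp add: pendant_sum_def)
  assume "pendant_sum V E = ?P"
  then have rest: "S (pendant_edges E - (A \<union> B)) = 0" and "?P = 2 * S A" "?P = 2 * S B"
    using halves(2) by (simp_all add: pendant_sum_def S_def)
  have "pendant_edges E - (A \<union> B) = {}"
  proof (rule ccontr)
    assume "pendant_edges E - (A \<union> B) \<noteq> {}"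
    then have "0 < S (pendant_edges E - (A \<union> B))"
      unfolding S_def using finL degree_fact_prod_pos[OF assms(2)] by (intro sum_pos) auto
    then show False
      using rest by simp
  qed
  with A(3)[OF \<open>?P = 2 * S A\<close>] B(3)[OF \<open>?P = 2 * S B\<close>]
  have "pendant_edges E \<subseteq> {{a, x}, {b, y}}"
    by auto
  then show "leaves V E \<subseteq> {x, y}"
    using leaves_subset_if_pendant_edges_subset[of E a x b y V] assms(5,6) by simp
qed

lemma longest_path_ge_4_pendant_sum:
  assumes "is_tree V E" "longest_path V E xs" "4 \<le> length xs"
  shows "degree_fact_prod V E \<le> pendant_sum V E"
    and "pendant_sum V E = degree_fact_prod V E \<Longrightarrow> is_path_graph V E"
proof -
  let ?P = "degree_fact_prod V E" and ?S = "\<lambda>A. \<Sum>l\<in>A. degree_fact_prod V (E - {l})"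
  let ?a = "xs ! 1" and ?b = "rev xs ! 1" and ?x = "xs ! 0" and ?y = "rev xs ! 0"
  have fin: "finite V" and finE: "finite E"
    using assms(1) simple_graph_finite_edges by (auto simp: is_tree_def simple_graph_def)
  have dxs: "distinct xs" and sV: "set xs \<subseteq> V" and wxs: "walk E xs"
    using assms(2) by (auto simp: longest_path_def simple_path_def)
  obtain A where A: "\<forall>e\<in>A. \<exists>y. e = {?a, y} \<and> pendant_at E y e"
    "?P \<le> 2 * ?S A" "?P = 2 * ?S A \<Longrightarrow> A = {{?a, ?x}}"
    using longest_path_end_pendant_sum[OF assms(1,2)] assms(3) by auto
  obtain B where B: "\<forall>e\<in>B. \<exists>y. e = {?b, y} \<and> pendant_at E y e"
    "?P \<le> 2 * ?S B" "?P = 2 * ?S B \<Longrightarrow> B = {{?b, ?y}}"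
    using longest_path_end_pendant_sum[OF assms(1) longest_path_rev[OF assms(2)]] assms(3) by auto
  have "2 \<le> degree E ?a" "2 \<le> degree E ?b"
    using walk_interior_degree[OF finE, of xs 1] walk_interior_degree[OF finE, of "rev xs" 1]
      dxs wxs assms(3) by (simp_all add: insert_commute)
  moreover have "?a \<noteq> ?b"
    using dxs assms(3) by (simp add: rev_nth nth_eq_iff_index_eq)
  ultimately have halves: "?P \<le> pendant_sum V E"
    "pendant_sum V E = ?P \<Longrightarrow> leaves V E \<subseteq> {?x, ?y}"
    using degree_fact_prod_le_pendant_sum_of_halves[OF fin finE _ _ _ A B] by blast+
  then show "?P \<le> pendant_sum V E"
    by blast
  assume "pendant_sum V E = ?P"
  moreover have "2 \<le> card V"
    using card_mono[OF fin sV] distinct_card[OF dxs] assms(3) by simp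
  ultimately show "is_path_graph V E"
    using halves(2) tree_leaves_subset_imp_path[OF assms(1)] \<open>?a \<noteq> ?b\<close> by blast
qed

lemma degree_fact_prod_le_pendant_sum:
  assumes "is_tree V E" "2 \<le> card V"
  shows "degree_fact_prod V E \<le> pendant_sum V E"
    and "pendant_sum V E = degree_fact_prod V E \<Longrightarrow> is_path_graph V E \<or> is_star V E"
proof -
  have sg: "simple_graph V E" and fin: "finite V"
    using assms(1) by (auto simp: is_tree_def simple_graph_def)
  have "E \<noteq> {}"
    using tree_no_edges[OF assms(1)] assms(2) by auto
  obtain xs where lp: "longest_path V E xs"
    using longest_path_exists[OF fin] .
  have len: "2 \<le> length xs"
    using longest_path_length_ge_2[OF sg \<open>E \<noteq> {}\<close> lp] .
  have "degree_fact_prod V E \<le> pendant_sum V E \<and>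
    (pendant_sum V E = degree_fact_prod V E \<longrightarrow> is_path_graph V E \<or> is_star V E)"
  proof (cases "length xs \<le> 3")
    case True
    have "xs ! 1 \<in> V"
      using lp len by (auto simp: longest_path_def simple_path_def)
    then have "is_star V E"
      using pendant_neighbours_imp_star[OF assms(1)] longest_path_le_3_pendant_at[OF assms(1) lp len True] by blast
    then obtain c where "c \<in> V" "E = {{c, v} | v. v \<in> V \<and> v \<noteq> c}"
      by (auto simp: is_star_def)
    then show ?thesis
      using star_pendant_sum[OF sg assms(2)] \<open>is_star V E\<close> by simp
  next
    case False
    then show ?thesis
      using longest_path_ge_4_pendant_sum[OF assms(1) lp] by simp
  qed
  then show "degree_fact_prod V E \<le> pendant_sum V E"
    and "pendant_sum V E = degree_fact_prod V E \<Longrightarrow> is_path_graph V E \<or> is_star V E"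
    by blast+
qed

lemma path_graph_pendant_sum:
  assumes "is_tree V E" "distinct vs" "set vs = V" "E = path_edges vs" "3 \<le> length vs"
  shows "pendant_sum V E = degree_fact_prod V E"
proof -
  let ?P = "degree_fact_prod V E" and ?f = "\<lambda>l. degree_fact_prod V (E - {l})"
  have sg: "simple_graph V E" and fin: "finite E"
    using assms(1) simple_graph_finite_edges by (auto simp: is_tree_def)
  have "2 * ?f {ws ! 0, ws ! 1} \<le> ?P"
    if ws: "distinct ws" "set ws = V" "E = path_edges ws" "3 \<le> length ws" for ws
  proof -
    have "pendant_at E (ws ! 0) {ws ! 1, ws ! 0}"
      using path_graph_first_edge(2)[OF assms(1) ws(1-3)] ws(4) by (simp add: insert_commute)
    then have "?P = degree E (ws ! 1) * ?f {ws ! 1, ws ! 0}"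
      by (rule degree_fact_prod_remove_pendant[OF sg])
    moreover have "2 \<le> degree E (ws ! 1)"
      using walk_interior_degree[OF fin, of ws 1] ws path_edges_subset_iff_walk by auto
    ultimately show ?thesis
      by (simp add: insert_commute)
  qed
  from this[OF assms(2-5)] this[of "rev vs"]
  have "?f {vs ! 0, vs ! 1} + ?f {rev vs ! 0, rev vs ! 1} \<le> ?P"
    using assms(2-5) by simp
  moreover have "pendant_sum V E \<le> (\<Sum>l\<in>{{vs ! 0, vs ! 1}, {rev vs ! 0, rev vs ! 1}}. ?f l)"
    unfolding pendant_sum_def
    using path_edges_pendant_at[OF assms(2)] assms(4) by (intro sum_mono2) (auto simp: pendant_edges_def)
  moreover have "(\<Sum>l\<in>{{vs ! 0, vs ! 1}, {rev vs ! 0, rev vs ! 1}}. ?f l)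
      \<le> ?f {vs ! 0, vs ! 1} + ?f {rev vs ! 0, rev vs ! 1}"
    by (simp add: sum.insert_if)
  moreover have "?P \<le> pendant_sum V E"
    using degree_fact_prod_le_pendant_sum(1)[OF assms(1)] assms(2,3,5) distinct_card by fastforce
  ultimately show ?thesis
    by linarith
qed

lemma path_or_star_pendant_sum:
  assumes "is_tree V E" "2 \<le> card V" "is_path_graph V E \<or> is_star V E"
  shows "pendant_sum V E = degree_fact_prod V E"
proof (cases "is_star V E")
  case True
  then obtain c where c: "c \<in> V" "E = {{c, v} | v. v \<in> V \<and> v \<noteq> c}"
    by (auto simp: is_star_def)
  have "simple_graph V E"
    using assms(1) by (simp add: is_tree_def)
  then show ?thesis
    using star_pendant_sum[OF _ assms(2) c] by blast
next
  case False
  then obtain vs where vs: "distinct vs" "set vs = V" "E = path_edges vs"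
    using assms(3) by (auto simp: is_path_graph_iff)
  moreover have "card V \<noteq> 2"
    using path_graph_card_2_imp_star False assms(3) by blast
  then have "3 \<le> length vs"
    using assms(2) distinct_card[OF vs(1)] vs(2) by simp
  ultimately show ?thesis
    using path_graph_pendant_sum[OF assms(1)] by blast
qed

lemma path_or_star_remove_pendant_edge:
  assumes "is_tree V E" "is_path_graph V E \<or> is_star V E" "l \<in> pendant_edges E"
  obtains w where "pendant_at E w l" "is_path_graph (V - {w}) (E - {l}) \<or> is_star (V - {w}) (E - {l})"
proof -
  consider vs where "distinct vs" "set vs = V" "E = path_edges vs"
    | c where "E = {{c, v} | v. v \<in> V \<and> v \<noteq> c}" "c \<in> V"
    using assms(2) by (auto simp: is_star_def is_path_graph_iff)
  then show thesis
  proof cases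
    case 1
    then show thesis
      using path_graph_remove_pendant_edge[OF assms(1) 1 assms(3)] that by blast
  next
    case 2
    then show thesis
      using star_remove_pendant_edge[OF 2 assms(3)] that by blast
  qed
qed

section \<open>Counting shellings\<close>

lemma pendant_sum_le_num_shellings:
  assumes "is_tree V E" "E \<noteq> {}"
  shows "pendant_sum V E \<le> F E"
  using assms
proof (induction "card V" arbitrary: V E rule: less_induct)
  case less
  show ?case
    unfolding pendant_sum_def tree_num_shellings_remove_last[OF less.prems]
  proof (rule sum_mono)
    fix l assume "l \<in> pendant_edges E"
    then obtain w where w: "pendant_at E w l"
      by (auto simp: pendant_edges_def)
    note sub = tree_remove_pendant_edge[OF less.prems(1) w]
    have "degree_fact_prod (V - {w}) (E - {l}) \<le> F (E - {l})"
    proof (cases "E - {l} = {}")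
      case False
      then show ?thesis
        using less.hyps[OF sub(2,1) False] degree_fact_prod_le_pendant_sum(1)[OF sub(1)]
          tree_edges_nonempty_iff[OF sub(1)] by simp
    qed (simp only: degree_fact_prod_no_edges num_shellings_empty)
    then show "degree_fact_prod V (E - {l}) \<le> F (E - {l})"
      using sub(3) by simp
  qed
qed

lemma path_or_star_num_shellings:
  assumes "is_tree V E" "is_path_graph V E \<or> is_star V E"
  shows "F E = degree_fact_prod V E"
  using assms
proof (induction "card V" arbitrary: V E rule: less_induct)
  case less
  show ?case
  proof (cases "E = {}")
    case False
    then have card: "2 \<le> card V"
      using tree_edges_nonempty_iff[OF less.prems(1)] by simp
    have "F (E - {l}) = degree_fact_prod V (E - {l})" if l: "l \<in> pendant_edges E" for l
    proof -
      obtain w where w: "pendant_at E w l"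
        and "is_path_graph (V - {w}) (E - {l}) \<or> is_star (V - {w}) (E - {l})"
        using path_or_star_remove_pendant_edge[OF less.prems l] by blast
      then show ?thesis
        using less.hyps tree_remove_pendant_edge[OF less.prems(1) w] by metis
    qed
    then show ?thesis
      using tree_num_shellings_remove_last[OF less.prems(1) False]
        path_or_star_pendant_sum[OF less.prems(1) card less.prems(2)]
      by (simp add: pendant_sum_def)
  qed (simp add: num_shellings_empty)
qed

theorem theorem3p8:
  fixes V :: "'a set" and E :: "'a set set"
  assumes "is_tree V E" and "card V \<ge> 2"
  shows "F E \<ge> (\<Prod>v\<in>V. fact (degree E v)) \<and>
    (F E = (\<Prod>v\<in>V. fact (degree E v)) \<longleftrightarrow> is_path_graph V E \<or> is_star V E)"
proof -
  have "degree_fact_prod V E \<le> pendant_sum V E" "pendant_sum V E \<le> F E"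
    using degree_fact_prod_le_pendant_sum(1) pendant_sum_le_num_shellings assms
      tree_edges_nonempty_iff[OF assms(1)] by auto
  moreover have "pendant_sum V E = degree_fact_prod V E \<Longrightarrow> is_path_graph V E \<or> is_star V E"
    using degree_fact_prod_le_pendant_sum(2)[OF assms] .
  moreover have "is_path_graph V E \<or> is_star V E \<Longrightarrow> F E = degree_fact_prod V E"
    using path_or_star_num_shellings[OF assms(1)] .
  ultimately show ?thesis
    unfolding degree_fact_prod_def[symmetric] by auto
qed

end
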